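(* Let $\mathbb{K}$ be a field, $q\in\mathbb{K}^*$ not a root of unity, and $R=\mathcal{O}_q(M_3)$. Let $\sigma$ be a $\mathbb{K}$-algebra automorphism of $R$ such that $\sigma(Y_{i,\alpha})-Y_{i,\alpha}\in R_{\ge2}$ for all $(i,\alpha)\in\{1,2,3\}^2$, and let $[I|\Lambda]$ be a $t\times t$ quantum minor. Then $\sigma([I|\Lambda])-[I|\Lambda]\in R_{\ge t+1}$. Consequently, $\sigma([I|\Lambda])=[I|\Lambda]$ if and only if $\deg(\sigma([I|\Lambda]))=t$.
   Context: $\mathcal{O}_q(M_3)$ is the $\mathbb{K}$-algebra generated by $Y_{i,\alpha}$, $1\le i,\alpha\le 3$, subject to: $Y_{i,\beta}Y_{i,\alpha}=q^{-1}Y_{i,\alpha}Y_{i,\beta}$ for $\alpha<\beta$; $Y_{j,\alpha}Y_{i,\alpha}=q^{-1}Y_{i,\alpha}Y_{j,\alpha}$ for $i<j$; $Y_{j,\beta}Y_{i,\alpha}=Y_{i,\alpha}Y_{j,\beta}$ for $i<j$, $\alpha>\beta$; $Y_{j,\beta}Y_{i,\alpha}=Y_{i,\alpha}Y_{j,\beta}-(q-q^{-1})Y_{i,\beta}Y_{j,\alpha}$ for $i<j$, $\alpha<\beta$. It is $\mathbb{N}$-graded $R=\bigoplus R_i$ with each $Y_{i,\alpha}$ of degree 1; $R_{\ge d}=\bigoplus_{i\ge d}R_i$; for nonzero $x\in R$, $\deg(x)$ is the largest $d$ with nonzero component of $x$ in $R_d$. For $I=\{i_1<\dots<i_t\}$,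 $\Lambda=\{\alpha_1<\dots<\alpha_t\}\subseteq\{1,2,3\}$, the quantum minor is $[I|\Lambda]=\sum_{w\in S_t}(-q)^{l(w)}Y_{i_1,\alpha_{w(1)}}\cdots Y_{i_t,\alpha_{w(t)}}$. *)

theory Defs
  imports "HOL-Combinatorics.Permutations"
begin

text \<open>The free K-algebra on the generators Y(i,a), 1 <= i,a <= 3: elements are
 finitely supported functions from words (lists of generator indices) to K.\<close>

type_synonym 'k fa = "(nat \<times> nat) list \<Rightarrow> 'k"

definition gens :: "(nat \<times> nat) set" where
  "gens = {1..3} \<times> {1..3}"

definition fa_set :: "'k::field fa set" where
  "fa_set = {f. finite {w. f w \<noteq> 0} \<and> (\<forall>w. f w \<noteq> 0 \<longrightarrow> set w \<subseteq> gens)}"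

definition fzero :: "'k::field fa" where "fzero = (\<lambda>w. 0)"
definition fadd :: "'k::field fa \<Rightarrow> 'k fa \<Rightarrow> 'k fa" where "fadd f g = (\<lambda>w. f w + g w)"
definition fdiff :: "'k::field fa \<Rightarrow> 'k fa \<Rightarrow> 'k fa" where "fdiff f g = (\<lambda>w. f w - g w)"
definition fsmult :: "'k::field \<Rightarrow> 'k fa \<Rightarrow> 'k fa" where "fsmult c f = (\<lambda>w. c * f w)"

definition fmul :: "'k::field fa \<Rightarrow> 'k fa \<Rightarrow> 'k fa" where
  "fmul f g = (\<lambda>w. \<Sum>i\<le>length w. f (take i w) * g (drop i w))"

definition mono :: "(nat \<times> nat) list \<Rightarrow> 'k::field fa" where
  "mono w = (\<lambda>u. if u = w then 1 else 0)"

definition Yf :: "nat \<Rightarrow> nat \<Rightarrow> 'k::field fa" where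
  "Yf i a = mono [(i, a)]"

definition rels :: "'k::field \<Rightarrow> 'k fa set" where
  "rels q =
     {fdiff (fmul (Yf i b) (Yf i a)) (fsmult (inverse q) (fmul (Yf i a) (Yf i b))) | i a b.
        i \<in> {1..3} \<and> a \<in> {1..3} \<and> b \<in> {1..3} \<and> a < b}
   \<union> {fdiff (fmul (Yf j a) (Yf i a)) (fsmult (inverse q) (fmul (Yf i a) (Yf j a))) | i j a.
        i \<in> {1..3} \<and> j \<in> {1..3} \<and> a \<in> {1..3} \<and> i < j}
   \<union> {fdiff (fmul (Yf j b) (Yf i a)) (fmul (Yf i a) (Yf j b)) | i j a b.
        i \<in> {1..3} \<and> j \<in> {1..3} \<and> a \<in> {1..3} \<and> b \<in> {1..3} \<and> i < j \<and> a > b}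
   \<union> {fadd (fdiff (fmul (Yf j b) (Yf i a)) (fmul (Yf i a) (Yf j b)))
           (fsmult (q - inverse q) (fmul (Yf i b) (Yf j a))) | i j a b.
        i \<in> {1..3} \<and> j \<in> {1..3} \<and> a \<in> {1..3} \<and> b \<in> {1..3} \<and> i < j \<and> a < b}"

inductive_set ideal :: "'k::field \<Rightarrow> 'k fa set" for q :: "'k" where
  gen: "r \<in> rels q \<Longrightarrow> r \<in> ideal q"
| zero: "fzero \<in> ideal q"
| add: "f \<in> ideal q \<Longrightarrow> g \<in> ideal q \<Longrightarrow> fadd f g \<in> ideal q"
| smult: "f \<in> ideal q \<Longrightarrow> fsmult c f \<in> ideal q"
| mult: "f \<in> ideal q \<Longrightarrow> a \<in> fa_set \<Longrightarrow> b \<in> fa_set \<Longrightarrow> fmul (fmul a f) b \<in> ideal q"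

text \<open>The quotient R = O_q(M_3): elements are residue classes.\<close>
definition cls :: "'k::field \<Rightarrow> 'k fa \<Rightarrow> 'k fa set" where
  "cls q f = {g \<in> fa_set. fdiff f g \<in> ideal q}"

definition Rcar :: "'k::field \<Rightarrow> 'k fa set set" where
  "Rcar q = cls q ` fa_set"

definition rep :: "'k::field fa set \<Rightarrow> 'k fa" where
  "rep X = (SOME f. f \<in> X)"

definition radd :: "'k::field \<Rightarrow> 'k fa set \<Rightarrow> 'k fa set \<Rightarrow> 'k fa set" where
  "radd q X Y = cls q (fadd (rep X) (rep Y))"
definition rsub :: "'k::field \<Rightarrow> 'k fa set \<Rightarrow> 'k fa set \<Rightarrow> 'k fa set" where
  "rsub q X Y = cls q (fdiff (rep X) (rep Y))"
definition rmul :: "'k::field \<Rightarrow> 'k fa set \<Rightarrow> 'k fa set \<Rightarrow> 'k fa set" where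
  "rmul q X Y = cls q (fmul (rep X) (rep Y))"
definition rsmult :: "'k::field \<Rightarrow> 'k \<Rightarrow> 'k fa set \<Rightarrow> 'k fa set" where
  "rsmult q c X = cls q (fsmult c (rep X))"
definition rone :: "'k::field \<Rightarrow> 'k fa set" where
  "rone q = cls q (mono [])"
definition rzero :: "'k::field \<Rightarrow> 'k fa set" where
  "rzero q = cls q fzero"

definition Y :: "'k::field \<Rightarrow> nat \<Rightarrow> nat \<Rightarrow> 'k fa set" where
  "Y q i a = cls q (Yf i a)"

definition alg_aut :: "'k::field \<Rightarrow> ('k fa set \<Rightarrow> 'k fa set) \<Rightarrow> bool" where
  "alg_aut q \<sigma> \<longleftrightarrow> bij_betw \<sigma> (Rcar q) (Rcar q)
     \<and> (\<forall>X\<in>Rcar q. \<forall>Z\<in>Rcar q. \<sigma> (radd q X Z) = radd q (\<sigma> X) (\<sigma> Z))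
     \<and> (\<forall>X\<in>Rcar q. \<forall>Z\<in>Rcar q. \<sigma> (rmul q X Z) = rmul q (\<sigma> X) (\<sigma> Z))
     \<and> (\<forall>c. \<forall>X\<in>Rcar q. \<sigma> (rsmult q c X) = rsmult q c (\<sigma> X))
     \<and> \<sigma> (rone q) = rone q"

definition hpart :: "nat \<Rightarrow> 'k::field fa \<Rightarrow> 'k fa" where
  "hpart d f = (\<lambda>w. if length w = d then f w else 0)"

definition Rge :: "'k::field \<Rightarrow> nat \<Rightarrow> 'k fa set set" where
  "Rge q d = cls q ` {f \<in> fa_set. \<forall>w. f w \<noteq> 0 \<longrightarrow> d \<le> length w}"

definition rcomp :: "'k::field \<Rightarrow> nat \<Rightarrow> 'k fa set \<Rightarrow> 'k fa set" where
  "rcomp q d X = cls q (hpart d (rep X))"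

definition rdeg :: "'k::field \<Rightarrow> 'k fa set \<Rightarrow> nat" where
  "rdeg q X = (GREATEST d. rcomp q d X \<noteq> rzero q)"

definition qminor_fa :: "'k::field \<Rightarrow> nat set \<Rightarrow> nat set \<Rightarrow> 'k fa" where
  "qminor_fa q I L = (let is = sorted_list_of_set I; as = sorted_list_of_set L; t = card I in
     (\<lambda>u. \<Sum>p \<in> {p. p permutes {..<t}}.
        (- q) ^ card {(i, j). i < j \<and> j < t \<and> p j < p i}
        * mono (map (\<lambda>k. (is ! k, as ! p k)) [0..<t]) u))"

definition qminor :: "'k::field \<Rightarrow> nat set \<Rightarrow> nat set \<Rightarrow> 'k fa set" where
  "qminor q I L = cls q (qminor_fa q I L)"

end

theory Submission
  imports Defs
begin

text \<open>Since \<sigma> fixes every generator modulo \<open>R\<^sub>\<ge>\<^sub>2\<close>, multiplicativity shows that \<sigma> fixes every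
  word of length \<open>n\<close> modulo \<open>R\<^sub>\<ge>\<^sub>n\<^sub>+\<^sub>1\<close>, hence by linearity every homogeneous element of degree
  \<open>n\<close>, in particular the degree-\<open>t\<close> lift of \<open>[I|\<Lambda>]\<close>. The defining relations are homogeneous,
  so the ideal is graded and homogeneous components, and with them the degree, are well defined
  on \<open>R\<close>. The minor is nonzero in \<open>R\<close>: evaluating every generator at the 0/1 matrix supported
  on the diagonal \<open>(i\<^sub>k, \<alpha>\<^sub>k)\<close> kills all relations but sends the minor to 1, as only the
  identity permutation contributes. Writing \<open>\<sigma>[I|\<Lambda>] = [I|\<Lambda>] + e\<close> with \<open>e \<in> R\<^sub>\<ge>\<^sub>t\<^sub>+\<^sub>1\<close>, the degree
  is \<open>t\<close> exactly when \<open>e = 0\<close>.\<close>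

abbreviation supp :: "'k::field fa \<Rightarrow> (nat \<times> nat) list set" where
  "supp f \<equiv> {w. f w \<noteq> 0}"

section \<open>The free algebra\<close>

lemma fa_setI: "finite (supp f) \<Longrightarrow> (\<And>w. f w \<noteq> 0 \<Longrightarrow> set w \<subseteq> gens) \<Longrightarrow> f \<in> fa_set"
  by (auto simp: fa_set_def)

lemma fa_set_finite_supp: "f \<in> fa_set \<Longrightarrow> finite (supp f)"
  by (auto simp: fa_set_def)

lemma fa_set_gens: "f \<in> fa_set \<Longrightarrow> f w \<noteq> 0 \<Longrightarrow> set w \<subseteq> gens"
  by (auto simp: fa_set_def)

lemma fa_set_subset:
  assumes "g \<in> fa_set" "supp f \<subseteq> supp g"
  shows "f \<in> fa_set"
  using assms finite_subset[OF assms(2)] by (intro fa_setI) (auto simp: fa_set_def)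

lemma fzero_in_fa_set [simp]: "fzero \<in> fa_set"
  by (auto simp: fa_set_def fzero_def)

lemma fadd_in_fa_set: "f \<in> fa_set \<Longrightarrow> g \<in> fa_set \<Longrightarrow> fadd f g \<in> fa_set"
proof (rule fa_setI)
  assume f: "f \<in> fa_set" and g: "g \<in> fa_set"
  have "supp (fadd f g) \<subseteq> supp f \<union> supp g" by (auto simp: fadd_def)
  then show "finite (supp (fadd f g))" using f g fa_set_finite_supp finite_subset by blast
  show "set w \<subseteq> gens" if "fadd f g w \<noteq> 0" for w
    using that f g fa_set_gens[of f w] fa_set_gens[of g w] by (cases "f w = 0") (auto simp: fadd_def)
qed

lemma fsmult_in_fa_set: "f \<in> fa_set \<Longrightarrow> fsmult c f \<in> fa_set"
  by (erule fa_set_subset) (auto simp: fsmult_def)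

lemma fdiff_eq_fadd_fsmult: "fdiff f g = fadd f (fsmult (-1) g)"
  by (simp add: fdiff_def fadd_def fsmult_def fun_eq_iff)

lemma fdiff_in_fa_set: "f \<in> fa_set \<Longrightarrow> g \<in> fa_set \<Longrightarrow> fdiff f g \<in> fa_set"
  by (simp add: fdiff_eq_fadd_fsmult fadd_in_fa_set fsmult_in_fa_set)

lemma hpart_in_fa_set: "f \<in> fa_set \<Longrightarrow> hpart d f \<in> fa_set"
  by (erule fa_set_subset) (auto simp: hpart_def)

lemma mono_in_fa_set: "set w \<subseteq> gens \<Longrightarrow> mono w \<in> fa_set"
  by (rule fa_setI) (auto simp: mono_def split: if_splits)

lemma Yf_in_fa_set: "i \<in> {1..3} \<Longrightarrow> a \<in> {1..3} \<Longrightarrow> Yf i a \<in> fa_set"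
  by (simp add: Yf_def mono_in_fa_set gens_def)

lemma sum_in_fa_set:
  "finite A \<Longrightarrow> (\<And>a. a \<in> A \<Longrightarrow> F a \<in> fa_set) \<Longrightarrow> (\<lambda>w. \<Sum>a\<in>A. F a w) \<in> fa_set"
proof (induction A rule: finite_induct)
  case empty
  then show ?case by (simp flip: fzero_def)
next
  case (insert x A)
  then have "(\<lambda>w. \<Sum>a\<in>insert x A. F a w) = fadd (F x) (\<lambda>w. \<Sum>a\<in>A. F a w)"
    by (simp add: fadd_def)
  with insert show ?case by (simp add: fadd_in_fa_set)
qed

lemma fmul_nonzero_split:
  assumes "fmul f g w \<noteq> 0"
  obtains u v where "w = u @ v" "f u \<noteq> 0" "g v \<noteq> 0"
proof -
  from assms obtain i where "f (take i w) * g (drop i w) \<noteq> 0"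
    unfolding fmul_def by (auto elim: sum.not_neutral_contains_not_neutral)
  then show thesis using that[of "take i w" "drop i w"] by simp
qed

lemma fmul_in_fa_set: "f \<in> fa_set \<Longrightarrow> g \<in> fa_set \<Longrightarrow> fmul f g \<in> fa_set"
proof (rule fa_setI)
  assume f: "f \<in> fa_set" and g: "g \<in> fa_set"
  have "supp (fmul f g) \<subseteq> (\<lambda>(u, v). u @ v) ` (supp f \<times> supp g)"
    by (auto elim!: fmul_nonzero_split)
  then show "finite (supp (fmul f g))"
    by (rule finite_subset) (use f g fa_set_finite_supp in auto)
  show "set w \<subseteq> gens" if "fmul f g w \<noteq> 0" for w
    using that by (elim fmul_nonzero_split) (use f g fa_set_gens in fastforce)
qed

lemma fmul_mono_Nil_right [simp]: "fmul f (mono []) = f"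
proof
  fix w
  have "fmul f (mono []) w = (\<Sum>i\<le>length w. if i = length w then f (take i w) else 0)"
    unfolding fmul_def mono_def by (intro sum.cong) auto
  then show "fmul f (mono []) w = f w" by simp
qed

lemma fmul_mono_Nil_left [simp]: "fmul (mono []) f = f"
proof
  fix w
  have "fmul (mono []) f w = (\<Sum>i\<le>length w. if i = 0 then f (drop i w) else 0)"
    unfolding fmul_def mono_def by (intro sum.cong) auto
  then show "fmul (mono []) f w = f w" by simp
qed

lemma fmul_mono_mono: "fmul (mono u) (mono v) = (mono (u @ v) :: 'k::field fa)"
proof
  fix w
  have "(take i w = u \<and> drop i w = v) \<longleftrightarrow> i = length u \<and> w = u @ v" if "i \<le> length w" for i
    using that by (metis append_eq_conv_conj append_take_drop_id length_take min.absorb2)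
  then have "fmul (mono u) (mono v) w = (\<Sum>i\<le>length w. if i = length u \<and> w = u @ v then 1 else 0)"
    unfolding fmul_def mono_def by (intro sum.cong) auto
  then show "fmul (mono u) (mono v) w = (mono (u @ v) :: 'k fa) w"
    by (auto simp: mono_def)
qed

lemma fmul_fadd_left: "fmul (fadd f g) h = fadd (fmul f h) (fmul g h)"
  by (simp add: fmul_def fadd_def fun_eq_iff algebra_simps sum.distrib)

lemma fmul_fadd_right: "fmul h (fadd f g) = fadd (fmul h f) (fmul h g)"
  by (simp add: fmul_def fadd_def fun_eq_iff algebra_simps sum.distrib)

lemma fmul_fdiff_left: "fmul (fdiff f g) h = fdiff (fmul f h) (fmul g h)"
  by (simp add: fmul_def fdiff_def fun_eq_iff algebra_simps sum_subtractf)

lemma fmul_fdiff_right: "fmul h (fdiff f g) = fdiff (fmul h f) (fmul h g)"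
  by (simp add: fmul_def fdiff_def fun_eq_iff algebra_simps sum_subtractf)

lemma fmul_sum_left: "fmul (\<lambda>w. \<Sum>a\<in>A. F a w) g = (\<lambda>w. \<Sum>a\<in>A. fmul (F a) g w)"
  by (simp add: fmul_def fun_eq_iff sum_distrib_right sum.swap[of _ A])

lemma fa_set_expansion:
  assumes "f \<in> fa_set"
  shows "f = (\<lambda>u. \<Sum>w\<in>supp f. fsmult (f w) (mono w) u)"
proof
  fix u
  have "(\<Sum>w\<in>supp f. fsmult (f w) (mono w) u) = (\<Sum>w\<in>supp f. if w = u then f u else 0)"
    by (intro sum.cong) (auto simp: fsmult_def mono_def)
  then show "f u = (\<Sum>w\<in>supp f. fsmult (f w) (mono w) u)"
    using fa_set_finite_supp[OF assms] by auto
qed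

section \<open>The quotient algebra\<close>

lemma rels_in_fa_set: "r \<in> rels q \<Longrightarrow> r \<in> fa_set"
  unfolding rels_def
  by (auto intro!: fdiff_in_fa_set fadd_in_fa_set fsmult_in_fa_set fmul_in_fa_set Yf_in_fa_set)

lemma ideal_in_fa_set: "f \<in> ideal q \<Longrightarrow> f \<in> fa_set"
  by (induction rule: ideal.induct)
    (auto intro: rels_in_fa_set fadd_in_fa_set fsmult_in_fa_set fmul_in_fa_set)

lemma ideal_fdiff: "f \<in> ideal q \<Longrightarrow> g \<in> ideal q \<Longrightarrow> fdiff f g \<in> ideal q"
  by (simp add: fdiff_eq_fadd_fsmult ideal.add ideal.smult)

lemma ideal_fmul_left: "f \<in> ideal q \<Longrightarrow> a \<in> fa_set \<Longrightarrow> fmul a f \<in> ideal q"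
  using ideal.mult[of f q a "mono []"] by (simp add: mono_in_fa_set)

lemma ideal_fmul_right: "f \<in> ideal q \<Longrightarrow> b \<in> fa_set \<Longrightarrow> fmul f b \<in> ideal q"
  using ideal.mult[of f q "mono []" b] by (simp add: mono_in_fa_set)

lemma ideal_sum:
  "finite A \<Longrightarrow> (\<And>a. a \<in> A \<Longrightarrow> F a \<in> ideal q) \<Longrightarrow> (\<lambda>w. \<Sum>a\<in>A. F a w) \<in> ideal q"
proof (induction A rule: finite_induct)
  case empty
  then show ?case using ideal.zero[of q] by (simp add: fzero_def)
next
  case (insert x A)
  then have "(\<lambda>w. \<Sum>a\<in>insert x A. F a w) = fadd (F x) (\<lambda>w. \<Sum>a\<in>A. F a w)"
    by (simp add: fadd_def)
  with insert show ?case by (simp add: ideal.add)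
qed

lemma fdiff_ideal_sym: "fdiff f g \<in> ideal q \<Longrightarrow> fdiff g f \<in> ideal q"
  using ideal.smult[of "fdiff f g" q "-1"] by (simp add: fsmult_def fdiff_def)

lemma fdiff_ideal_trans: "fdiff f g \<in> ideal q \<Longrightarrow> fdiff g h \<in> ideal q \<Longrightarrow> fdiff f h \<in> ideal q"
  using ideal.add[of "fdiff f g" q "fdiff g h"] by (simp add: fadd_def fdiff_def)

lemma cls_self: "f \<in> fa_set \<Longrightarrow> f \<in> cls q f"
  using ideal.zero[of q] by (simp add: cls_def fdiff_def fzero_def)

lemma cls_eq_iff: "f \<in> fa_set \<Longrightarrow> g \<in> fa_set \<Longrightarrow> cls q f = cls q g \<longleftrightarrow> fdiff f g \<in> ideal q"
  using cls_self[of g q] fdiff_ideal_sym fdiff_ideal_trans unfolding cls_def by blast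

lemma cls_eq_fzero_iff: "f \<in> fa_set \<Longrightarrow> cls q f = cls q fzero \<longleftrightarrow> f \<in> ideal q"
  using cls_eq_iff[OF _ fzero_in_fa_set, of f q] by (simp add: fdiff_def fzero_def)

lemma cls_in_Rcar: "f \<in> fa_set \<Longrightarrow> cls q f \<in> Rcar q"
  by (simp add: Rcar_def)

lemma rep_cls: "f \<in> fa_set \<Longrightarrow> rep (cls q f) \<in> fa_set \<and> fdiff f (rep (cls q f)) \<in> ideal q"
  using someI[of "\<lambda>g. g \<in> cls q f", OF cls_self] by (simp add: rep_def cls_def)

lemma radd_cls: "f \<in> fa_set \<Longrightarrow> g \<in> fa_set \<Longrightarrow> radd q (cls q f) (cls q g) = cls q (fadd f g)"
proof -
  assume f: "f \<in> fa_set" and g: "g \<in> fa_set"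
  obtain f' g' where f': "f' \<in> fa_set" "fdiff f f' \<in> ideal q" "rep (cls q f) = f'"
    and g': "g' \<in> fa_set" "fdiff g g' \<in> ideal q" "rep (cls q g) = g'"
    using rep_cls[OF f] rep_cls[OF g] by blast
  have "fdiff (fadd f' g') (fadd f g) = fsmult (-1) (fadd (fdiff f f') (fdiff g g'))"
    by (simp add: fadd_def fdiff_def fsmult_def fun_eq_iff)
  then have "fdiff (fadd f' g') (fadd f g) \<in> ideal q"
    using f' g' by (simp add: ideal.add ideal.smult)
  then show ?thesis
    unfolding radd_def f'(3) g'(3) using cls_eq_iff f' g' f g fadd_in_fa_set by blast
qed

lemma rsmult_cls: "f \<in> fa_set \<Longrightarrow> rsmult q c (cls q f) = cls q (fsmult c f)"
proof -
  assume f: "f \<in> fa_set"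
  obtain f' where f': "f' \<in> fa_set" "fdiff f f' \<in> ideal q" "rep (cls q f) = f'"
    using rep_cls[OF f] by blast
  have "fdiff (fsmult c f') (fsmult c f) = fsmult (-c) (fdiff f f')"
    by (simp add: fsmult_def fdiff_def fun_eq_iff algebra_simps)
  then have "fdiff (fsmult c f') (fsmult c f) \<in> ideal q" using f' by (simp add: ideal.smult)
  then show ?thesis
    unfolding rsmult_def f'(3) using cls_eq_iff f' f fsmult_in_fa_set by blast
qed

lemma rsub_cls: "f \<in> fa_set \<Longrightarrow> g \<in> fa_set \<Longrightarrow> rsub q (cls q f) (cls q g) = cls q (fdiff f g)"
proof -
  assume f: "f \<in> fa_set" and g: "g \<in> fa_set"
  obtain f' g' where f': "f' \<in> fa_set" "fdiff f f' \<in> ideal q" "rep (cls q f) = f'"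
    and g': "g' \<in> fa_set" "fdiff g g' \<in> ideal q" "rep (cls q g) = g'"
    using rep_cls[OF f] rep_cls[OF g] by blast
  have "fdiff (fdiff f' g') (fdiff f g) = fdiff (fdiff g g') (fdiff f f')"
    by (simp add: fdiff_def fun_eq_iff)
  then have "fdiff (fdiff f' g') (fdiff f g) \<in> ideal q" using f' g' by (simp add: ideal_fdiff)
  then show ?thesis
    unfolding rsub_def f'(3) g'(3) using cls_eq_iff f' g' f g fdiff_in_fa_set by blast
qed

lemma rmul_cls: "f \<in> fa_set \<Longrightarrow> g \<in> fa_set \<Longrightarrow> rmul q (cls q f) (cls q g) = cls q (fmul f g)"
proof -
  assume f: "f \<in> fa_set" and g: "g \<in> fa_set"
  obtain f' g' where f': "f' \<in> fa_set" "fdiff f f' \<in> ideal q" "rep (cls q f) = f'"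
    and g': "g' \<in> fa_set" "fdiff g g' \<in> ideal q" "rep (cls q g) = g'"
    using rep_cls[OF f] rep_cls[OF g] by blast
  have "fdiff (fmul f g) (fmul f' g') = fadd (fmul (fdiff f f') g) (fmul f' (fdiff g g'))"
    by (simp add: fmul_fdiff_left fmul_fdiff_right) (simp add: fadd_def fdiff_def fun_eq_iff)
  also have "\<dots> \<in> ideal q"
    using f' g' g by (simp add: ideal.add ideal_fmul_left ideal_fmul_right)
  finally have "fdiff (fmul f' g') (fmul f g) \<in> ideal q" by (rule fdiff_ideal_sym)
  then show ?thesis
    unfolding rmul_def f'(3) g'(3) using cls_eq_iff f' g' f g fmul_in_fa_set by blast
qed


section \<open>Grading\<close>

definition homogeneous :: "nat \<Rightarrow> 'k::field fa \<Rightarrow> bool" where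
  "homogeneous d f \<longleftrightarrow> (\<forall>w. f w \<noteq> 0 \<longrightarrow> length w = d)"

definition order_ge :: "nat \<Rightarrow> 'k::field fa \<Rightarrow> bool" where
  "order_ge d f \<longleftrightarrow> (\<forall>w. f w \<noteq> 0 \<longrightarrow> d \<le> length w)"

lemma homogeneous_mono: "homogeneous (length w) (mono w)"
  by (simp add: homogeneous_def mono_def)

lemma homogeneous_fadd: "homogeneous d f \<Longrightarrow> homogeneous d g \<Longrightarrow> homogeneous d (fadd f g)"
  unfolding homogeneous_def fadd_def by (metis add.right_neutral)

lemma homogeneous_fsmult: "homogeneous d f \<Longrightarrow> homogeneous d (fsmult c f)"
  unfolding homogeneous_def fsmult_def by auto

lemma homogeneous_fdiff: "homogeneous d f \<Longrightarrow> homogeneous d g \<Longrightarrow> homogeneous d (fdiff f g)"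
  unfolding fdiff_eq_fadd_fsmult by (intro homogeneous_fadd homogeneous_fsmult)

lemma homogeneous_fmul:
  "homogeneous a f \<Longrightarrow> homogeneous b g \<Longrightarrow> homogeneous (a + b) (fmul f g)"
  unfolding homogeneous_def by (auto elim!: fmul_nonzero_split)

lemma hpart_homogeneous: "homogeneous n f \<Longrightarrow> hpart d f = (if d = n then f else fzero)"
  by (auto simp: homogeneous_def hpart_def fzero_def fun_eq_iff)

lemma order_ge_fzero [simp]: "order_ge d fzero"
  by (simp add: order_ge_def fzero_def)

lemma order_ge_fadd: "order_ge d f \<Longrightarrow> order_ge d g \<Longrightarrow> order_ge d (fadd f g)"
  unfolding order_ge_def fadd_def by (metis add.right_neutral)

lemma order_ge_fsmult: "order_ge d f \<Longrightarrow> order_ge d (fsmult c f)"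
  unfolding order_ge_def fsmult_def by auto

lemma order_ge_mono: "order_ge d f \<Longrightarrow> d' \<le> d \<Longrightarrow> order_ge d' f"
  unfolding order_ge_def by force

lemma order_ge_fmul: "order_ge a f \<Longrightarrow> order_ge b g \<Longrightarrow> order_ge (a + b) (fmul f g)"
  unfolding order_ge_def by (force elim!: fmul_nonzero_split)

lemma order_ge_homogeneous: "homogeneous d f \<Longrightarrow> order_ge d f"
  by (simp add: homogeneous_def order_ge_def)

lemma hpart_below_order: "order_ge n f \<Longrightarrow> d < n \<Longrightarrow> hpart d f = fzero"
  by (auto simp: order_ge_def hpart_def fzero_def fun_eq_iff)

lemma hpart_fadd: "hpart d (fadd f g) = fadd (hpart d f) (hpart d g)"
  by (simp add: hpart_def fadd_def fun_eq_iff)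

lemma hpart_fmul: "hpart d (fmul f g) = (\<lambda>w. \<Sum>i\<le>d. fmul (hpart i f) (hpart (d - i) g) w)"
proof
  fix w
  show "hpart d (fmul f g) w = (\<Sum>i\<le>d. fmul (hpart i f) (hpart (d - i) g) w)"
  proof (cases "length w = d")
    case False
    have "fmul (hpart i f) (hpart (d - i) g) w = 0" if "i \<le> d" for i
      unfolding fmul_def hpart_def using False that by (intro sum.neutral) auto
    with False show ?thesis by (simp add: hpart_def)
  next
    case True
    have "(\<Sum>i\<le>d. fmul (hpart i f) (hpart (d - i) g) w)
        = (\<Sum>i\<le>d. \<Sum>j\<le>length w. if j = i then f (take j w) * g (drop j w) else 0)"
      unfolding fmul_def hpart_def using True by (intro sum.cong refl) (auto simp: min_def)
    also have "\<dots> = (\<Sum>j\<le>length w. f (take j w) * g (drop j w))"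
      using True by (subst sum.swap) simp
    finally show ?thesis using True by (simp add: hpart_def fmul_def)
  qed
qed

lemma fa_set_length_bounded:
  assumes "f \<in> fa_set"
  obtains N where "\<And>w. f w \<noteq> 0 \<Longrightarrow> length w \<le> N"
proof -
  have "finite (length ` supp f)" using fa_set_finite_supp[OF assms] by blast
  then show thesis using that by (meson finite_nat_set_iff_bounded_le imageI mem_Collect_eq)
qed

lemma hpart_sum_eq:
  assumes "\<And>w. f w \<noteq> 0 \<Longrightarrow> length w \<le> N"
  shows "f = (\<lambda>w. \<Sum>d\<le>N. hpart d f w)"
  using assms by (force simp: hpart_def fun_eq_iff)

lemma exists_hpart_notin_ideal:
  assumes "e \<in> fa_set" "e \<notin> ideal q" "order_ge n e"
  obtains d where "n \<le> d" "hpart d e \<notin> ideal q"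
proof -
  obtain N where "\<And>w. e w \<noteq> 0 \<Longrightarrow> length w \<le> N"
    using fa_set_length_bounded[OF assms(1)] by blast
  then have "e = (\<lambda>w. \<Sum>d\<le>N. hpart d e w)" by (rule hpart_sum_eq)
  with assms(2) have "\<exists>d. hpart d e \<notin> ideal q" by (metis ideal_sum finite_atMost)
  then obtain d where d: "hpart d e \<notin> ideal q" by blast
  moreover have "n \<le> d"
    using d ideal.zero hpart_below_order[OF assms(3)] by (metis not_le)
  ultimately show thesis using that by blast
qed

lemma rels_homogeneous: "r \<in> rels q \<Longrightarrow> homogeneous 2 r"
proof -
  have "homogeneous (1 + 1) (fmul (Yf i a) (Yf j b))" for i a j b
    by (intro homogeneous_fmul) (simp_all add: Yf_def homogeneous_def mono_def)
  then have YY: "homogeneous 2 (fmul (Yf i a) (Yf j b))" for i a j b by (simp only: one_add_one)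
  assume "r \<in> rels q"
  then show ?thesis unfolding rels_def
    by (auto intro!: homogeneous_fdiff homogeneous_fadd homogeneous_fsmult YY)
qed

lemma hpart_ideal: "f \<in> ideal q \<Longrightarrow> hpart d f \<in> ideal q"
proof (induction arbitrary: d rule: ideal.induct)
  case (gen r)
  then show ?case
    using hpart_homogeneous[OF rels_homogeneous[OF gen]] by (simp add: ideal.gen ideal.zero)
next
  case zero
  then show ?case using ideal.zero[of q] by (simp add: hpart_def fzero_def)
next
  case (add f g)
  then show ?case by (simp add: hpart_fadd ideal.add)
next
  case (smult f c)
  have "hpart d (fsmult c f) = fsmult c (hpart d f)" by (simp add: hpart_def fsmult_def fun_eq_iff)
  with smult show ?case by (simp add: ideal.smult)
next
  case (mult f a b)
  have "hpart d (fmul (fmul a f) b)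
      = (\<lambda>w. \<Sum>i\<le>d. \<Sum>j\<le>i. fmul (fmul (hpart j a) (hpart (i - j) f)) (hpart (d - i) b) w)"
    by (simp add: hpart_fmul fmul_sum_left)
  also have "\<dots> \<in> ideal q"
    using mult by (auto intro!: ideal_sum ideal.mult hpart_in_fa_set)
  finally show ?case .
qed

lemma rcomp_cls: "f \<in> fa_set \<Longrightarrow> rcomp q d (cls q f) = cls q (hpart d f)"
proof -
  assume f: "f \<in> fa_set"
  obtain f' where f': "f' \<in> fa_set" "fdiff f f' \<in> ideal q" "rep (cls q f) = f'"
    using rep_cls[OF f] by blast
  have "fdiff (hpart d f') (hpart d f) = hpart d (fsmult (-1) (fdiff f f'))"
    by (simp add: hpart_def fsmult_def fdiff_def fun_eq_iff)
  then have "fdiff (hpart d f') (hpart d f) \<in> ideal q"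
    using f' by (simp add: hpart_ideal ideal.smult)
  then show ?thesis
    unfolding rcomp_def f'(3) using cls_eq_iff hpart_in_fa_set f' f by blast
qed

lemma rcomp_cls_eq_rzero_iff:
  "f \<in> fa_set \<Longrightarrow> rcomp q d (cls q f) = rzero q \<longleftrightarrow> hpart d f \<in> ideal q"
  by (simp add: rcomp_cls rzero_def cls_eq_fzero_iff hpart_in_fa_set)

lemma le_rdeg_cls:
  assumes "f \<in> fa_set" "hpart d f \<notin> ideal q"
  shows "d \<le> rdeg q (cls q f)"
proof -
  obtain N where N: "\<And>w. f w \<noteq> 0 \<Longrightarrow> length w \<le> N"
    using fa_set_length_bounded[OF assms(1)] by blast
  have "hpart y f = fzero" if "N < y" for y
    using that N by (force simp: hpart_def fzero_def)
  then have "y \<le> N" if "hpart y f \<notin> ideal q" for y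
    using that ideal.zero[of q] by (metis not_le)
  then show ?thesis
    unfolding rdeg_def using assms by (intro Greatest_le_nat) (auto simp: rcomp_cls_eq_rzero_iff)
qed

lemma rdeg_cls_homogeneous:
  assumes "f \<in> fa_set" "homogeneous t f" "f \<notin> ideal q"
  shows "rdeg q (cls q f) = t"
  unfolding rdeg_def using assms ideal.zero[of q]
  by (intro Greatest_equality) (auto simp: rcomp_cls_eq_rzero_iff hpart_homogeneous split: if_splits)

lemma rdeg_cls_fadd_order_ge:
  assumes m: "m \<in> fa_set" "homogeneous t m" "m \<notin> ideal q"
    and e: "e \<in> fa_set" "order_ge (t + 1) e"
  shows "rdeg q (cls q (fadd m e)) = t \<longleftrightarrow> e \<in> ideal q"
proof
  assume "e \<in> ideal q"
  then have "cls q (fadd m e) = cls q m"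
    using cls_eq_iff[OF fadd_in_fa_set[OF m(1) e(1)] m(1)] by (simp add: fdiff_def fadd_def)
  then show "rdeg q (cls q (fadd m e)) = t" using rdeg_cls_homogeneous[OF m] by simp
next
  assume deg: "rdeg q (cls q (fadd m e)) = t"
  show "e \<in> ideal q"
  proof (rule ccontr)
    assume "e \<notin> ideal q"
    then obtain d where d: "t + 1 \<le> d" "hpart d e \<notin> ideal q"
      using exists_hpart_notin_ideal e(1,2) by blast
    then have "hpart d (fadd m e) = hpart d e"
      using m(2) by (auto simp: hpart_def homogeneous_def fadd_def fun_eq_iff)
    then have "d \<le> rdeg q (cls q (fadd m e))"
      using le_rdeg_cls[OF fadd_in_fa_set[OF m(1) e(1)]] d by simp
    with deg d show False by simp
  qed
qed

lemma Rge_eq: "Rge q d = cls q ` {f \<in> fa_set. order_ge d f}"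
  by (simp add: Rge_def order_ge_def)


section \<open>Automorphisms that are the identity modulo higher order\<close>

definition fixed_upto :: "'k::field \<Rightarrow> ('k fa set \<Rightarrow> 'k fa set) \<Rightarrow> nat \<Rightarrow> 'k fa \<Rightarrow> bool" where
  "fixed_upto q \<sigma> d f \<longleftrightarrow> (\<exists>e\<in>fa_set. order_ge d e \<and> \<sigma> (cls q f) = cls q (fadd f e))"

lemma fixed_upto_iff_rsub_in_Rge:
  assumes f: "f \<in> fa_set" and \<sigma>f: "\<sigma> (cls q f) \<in> Rcar q"
  shows "fixed_upto q \<sigma> d f \<longleftrightarrow> rsub q (\<sigma> (cls q f)) (cls q f) \<in> Rge q d"
proof
  assume "fixed_upto q \<sigma> d f"
  then obtain e where e: "e \<in> fa_set" "order_ge d e" "\<sigma> (cls q f) = cls q (fadd f e)"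
    by (auto simp: fixed_upto_def)
  have "rsub q (\<sigma> (cls q f)) (cls q f) = cls q (fdiff (fadd f e) f)"
    using e f by (simp add: rsub_cls fadd_in_fa_set)
  also have "fdiff (fadd f e) f = e" by (simp add: fdiff_def fadd_def fun_eq_iff)
  finally show "rsub q (\<sigma> (cls q f)) (cls q f) \<in> Rge q d" using e by (simp add: Rge_eq)
next
  assume "rsub q (\<sigma> (cls q f)) (cls q f) \<in> Rge q d"
  then obtain e where e: "e \<in> fa_set" "order_ge d e" "rsub q (\<sigma> (cls q f)) (cls q f) = cls q e"
    by (auto simp: Rge_eq)
  obtain g where g: "g \<in> fa_set" "\<sigma> (cls q f) = cls q g" using \<sigma>f by (auto simp: Rcar_def)
  have "cls q (fdiff g f) = cls q e" using e g f by (simp add: rsub_cls)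
  then have "fdiff (fdiff g f) e \<in> ideal q" using cls_eq_iff e(1) fdiff_in_fa_set[OF g(1) f] by blast
  moreover have "fdiff (fdiff g f) e = fdiff g (fadd f e)" by (simp add: fdiff_def fadd_def fun_eq_iff)
  ultimately have "\<sigma> (cls q f) = cls q (fadd f e)"
    using g cls_eq_iff[OF g(1) fadd_in_fa_set[OF f e(1)]] by simp
  with e show "fixed_upto q \<sigma> d f" by (auto simp: fixed_upto_def)
qed

context
  fixes q :: "'k::field" and \<sigma> :: "'k fa set \<Rightarrow> 'k fa set"
  assumes aut: "alg_aut q \<sigma>"
begin

lemma aut_in_Rcar: "X \<in> Rcar q \<Longrightarrow> \<sigma> X \<in> Rcar q"
  using aut unfolding alg_aut_def by (meson bij_betw_apply)

lemma aut_cls_fadd: "f \<in> fa_set \<Longrightarrow> g \<in> fa_set \<Longrightarrow>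
    \<sigma> (cls q (fadd f g)) = radd q (\<sigma> (cls q f)) (\<sigma> (cls q g))"
  using aut radd_cls[of f g q] cls_in_Rcar unfolding alg_aut_def by metis

lemma aut_cls_fmul: "f \<in> fa_set \<Longrightarrow> g \<in> fa_set \<Longrightarrow>
    \<sigma> (cls q (fmul f g)) = rmul q (\<sigma> (cls q f)) (\<sigma> (cls q g))"
  using aut rmul_cls[of f g q] cls_in_Rcar unfolding alg_aut_def by metis

lemma aut_cls_fsmult: "f \<in> fa_set \<Longrightarrow> \<sigma> (cls q (fsmult c f)) = rsmult q c (\<sigma> (cls q f))"
  using aut rsmult_cls[of f q c] cls_in_Rcar unfolding alg_aut_def by metis

lemma fixed_upto_fzero: "fixed_upto q \<sigma> d fzero"
proof -
  have "\<sigma> (cls q fzero) = \<sigma> (cls q (fsmult 0 fzero))" by (simp add: fsmult_def fzero_def)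
  also have "\<dots> = rsmult q 0 (\<sigma> (cls q fzero))" by (simp add: aut_cls_fsmult)
  also have "\<dots> = cls q (fadd fzero fzero)" by (simp add: rsmult_def fsmult_def fadd_def fzero_def)
  finally show ?thesis by (auto simp: fixed_upto_def intro!: bexI[of _ fzero])
qed

lemma fixed_upto_fadd:
  assumes "f \<in> fa_set" "g \<in> fa_set" "fixed_upto q \<sigma> d f" "fixed_upto q \<sigma> d g"
  shows "fixed_upto q \<sigma> d (fadd f g)"
proof -
  obtain e1 e2 where e1: "e1 \<in> fa_set" "order_ge d e1" "\<sigma> (cls q f) = cls q (fadd f e1)"
    and e2: "e2 \<in> fa_set" "order_ge d e2" "\<sigma> (cls q g) = cls q (fadd g e2)"
    using assms(3,4) by (auto simp: fixed_upto_def)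
  have "\<sigma> (cls q (fadd f g)) = cls q (fadd (fadd f e1) (fadd g e2))"
    using assms e1 e2 by (simp add: aut_cls_fadd radd_cls fadd_in_fa_set)
  also have "fadd (fadd f e1) (fadd g e2) = fadd (fadd f g) (fadd e1 e2)"
    by (simp add: fadd_def fun_eq_iff algebra_simps)
  finally show ?thesis
    using e1 e2 by (auto simp: fixed_upto_def intro!: fadd_in_fa_set order_ge_fadd)
qed

lemma fixed_upto_fsmult:
  assumes "f \<in> fa_set" "fixed_upto q \<sigma> d f"
  shows "fixed_upto q \<sigma> d (fsmult c f)"
proof -
  obtain e where e: "e \<in> fa_set" "order_ge d e" "\<sigma> (cls q f) = cls q (fadd f e)"
    using assms(2) by (auto simp: fixed_upto_def)
  have "\<sigma> (cls q (fsmult c f)) = cls q (fsmult c (fadd f e))"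
    using assms e by (simp add: aut_cls_fsmult rsmult_cls fadd_in_fa_set)
  also have "fsmult c (fadd f e) = fadd (fsmult c f) (fsmult c e)"
    by (simp add: fsmult_def fadd_def fun_eq_iff algebra_simps)
  finally show ?thesis
    using e by (auto simp: fixed_upto_def intro!: fsmult_in_fa_set order_ge_fsmult)
qed

lemma fixed_upto_sum:
  "finite A \<Longrightarrow> (\<And>a. a \<in> A \<Longrightarrow> F a \<in> fa_set \<and> fixed_upto q \<sigma> d (F a)) \<Longrightarrow>
    fixed_upto q \<sigma> d (\<lambda>w. \<Sum>a\<in>A. F a w)"
proof (induction A rule: finite_induct)
  case empty
  then show ?case using fixed_upto_fzero by (simp add: fzero_def)
next
  case (insert x A)
  then have "(\<lambda>w. \<Sum>a\<in>insert x A. F a w) = fadd (F x) (\<lambda>w. \<Sum>a\<in>A. F a w)"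
    by (simp add: fadd_def)
  with insert show ?case by (simp add: fixed_upto_fadd sum_in_fa_set)
qed

lemma fixed_upto_fmul:
  assumes f: "f \<in> fa_set" "order_ge a f" "fixed_upto q \<sigma> (a + 1) f"
    and g: "g \<in> fa_set" "order_ge b g" "fixed_upto q \<sigma> (b + 1) g"
  shows "fixed_upto q \<sigma> (a + b + 1) (fmul f g)"
proof -
  obtain e1 e2 where e1: "e1 \<in> fa_set" "order_ge (a + 1) e1" "\<sigma> (cls q f) = cls q (fadd f e1)"
    and e2: "e2 \<in> fa_set" "order_ge (b + 1) e2" "\<sigma> (cls q g) = cls q (fadd g e2)"
    using f(3) g(3) by (auto simp: fixed_upto_def)
  define e where "e = fadd (fmul f e2) (fmul e1 (fadd g e2))"
  have "\<sigma> (cls q (fmul f g)) = cls q (fmul (fadd f e1) (fadd g e2))"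
    using f g e1 e2 by (simp add: aut_cls_fmul rmul_cls fadd_in_fa_set)
  also have "fmul (fadd f e1) (fadd g e2) = fadd (fmul f g) e"
    by (simp only: e_def fmul_fadd_left fmul_fadd_right) (simp add: fadd_def fun_eq_iff algebra_simps)
  finally have "\<sigma> (cls q (fmul f g)) = cls q (fadd (fmul f g) e)" .
  moreover have "e \<in> fa_set" using f g e1 e2 by (simp add: e_def fadd_in_fa_set fmul_in_fa_set)
  moreover have "order_ge (a + b + 1) e"
  proof -
    have "order_ge b (fadd g e2)" using g(2) e2(2) by (simp add: order_ge_fadd order_ge_mono)
    then show ?thesis
      using order_ge_fmul[OF f(2) e2(2)] order_ge_fmul[OF e1(2)] unfolding e_def
      by (simp add: order_ge_fadd add.assoc add.left_commute)
  qed
  ultimately show ?thesis by (auto simp: fixed_upto_def)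
qed

context
  assumes unipotent: "\<forall>i\<in>{1..3}. \<forall>a\<in>{1..3}. rsub q (\<sigma> (Y q i a)) (Y q i a) \<in> Rge q 2"
begin

lemma fixed_upto_generator:
  assumes "y \<in> gens"
  shows "fixed_upto q \<sigma> 2 (mono [y])"
proof -
  have "rsub q (\<sigma> (cls q (mono [y]))) (cls q (mono [y])) \<in> Rge q 2"
    using assms unipotent by (auto simp: gens_def Y_def Yf_def)
  moreover have "mono [y] \<in> fa_set" using assms by (simp add: mono_in_fa_set)
  ultimately show ?thesis using fixed_upto_iff_rsub_in_Rge aut_in_Rcar cls_in_Rcar by blast
qed

lemma fixed_upto_mono: "set w \<subseteq> gens \<Longrightarrow> fixed_upto q \<sigma> (length w + 1) (mono w)"
proof (induction w rule: rev_induct)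
  case Nil
  have "\<sigma> (cls q (mono [])) = cls q (fadd (mono []) fzero)"
    using aut by (simp add: alg_aut_def rone_def fadd_def fzero_def)
  then show ?case by (auto simp: fixed_upto_def intro!: bexI[of _ fzero])
next
  case (snoc y w)
  moreover have "order_ge (length [y]) (mono [y])" "fixed_upto q \<sigma> (length [y] + 1) (mono [y])"
    using order_ge_homogeneous[OF homogeneous_mono[of "[y]"]] fixed_upto_generator[of y] snoc.prems
    by (simp_all add: numeral_2_eq_2)
  ultimately have "fixed_upto q \<sigma> (length w + length [y] + 1) (fmul (mono w) (mono [y]))"
    by (intro fixed_upto_fmul) (auto simp: mono_in_fa_set order_ge_homogeneous homogeneous_mono)
  then show ?case by (simp add: fmul_mono_mono)
qed

lemma fixed_upto_homogeneous:
  assumes "f \<in> fa_set" "homogeneous n f"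
  shows "fixed_upto q \<sigma> (n + 1) f"
proof -
  have "fixed_upto q \<sigma> (n + 1) (\<lambda>u. \<Sum>w\<in>supp f. fsmult (f w) (mono w) u)"
    using assms fa_set_gens[OF assms(1)] fixed_upto_mono
    by (intro fixed_upto_sum)
      (auto simp: fa_set_finite_supp homogeneous_def mono_in_fa_set fsmult_in_fa_set
        intro!: fixed_upto_fsmult)
  with fa_set_expansion[OF assms(1)] show ?thesis by simp
qed

end

end


section \<open>A character of \<open>\<O>\<^sub>q(M\<^sub>3)\<close> detecting quantum minors\<close>

text \<open>Evaluation of each generator \<open>Y\<^sub>i\<^sub>,\<^sub>a\<close> at the entry \<open>(i, a)\<close> of the 0/1 matrix with support \<open>D\<close>.\<close>

definition eval_word :: "(nat \<times> nat) set \<Rightarrow> (nat \<times> nat) list \<Rightarrow> 'k::field" where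
  "eval_word D w = (if set w \<subseteq> D then 1 else 0)"

definition eval_at :: "(nat \<times> nat) set \<Rightarrow> 'k::field fa \<Rightarrow> 'k" where
  "eval_at D f = (\<Sum>w\<in>supp f. f w * eval_word D w)"

lemma eval_at_eq_sum: "finite S \<Longrightarrow> supp f \<subseteq> S \<Longrightarrow> eval_at D f = (\<Sum>w\<in>S. f w * eval_word D w)"
  unfolding eval_at_def by (rule sum.mono_neutral_left) auto

lemma eval_at_fzero [simp]: "eval_at D fzero = 0"
  by (simp add: eval_at_def fzero_def)

lemma eval_at_mono [simp]: "eval_at D (mono w :: 'k::field fa) = eval_word D w"
proof -
  have "supp (mono w :: 'k fa) = {w}" by (auto simp: mono_def)
  then show ?thesis by (simp add: eval_at_def mono_def)
qed

lemma eval_at_fadd: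
  assumes "f \<in> fa_set" "g \<in> fa_set"
  shows "eval_at D (fadd f g) = eval_at D f + eval_at D g"
proof -
  let ?S = "supp f \<union> supp g"
  have S: "finite ?S" using assms fa_set_finite_supp by blast
  have "eval_at D (fadd f g) = (\<Sum>w\<in>?S. fadd f g w * eval_word D w)"
    using S by (intro eval_at_eq_sum) (auto simp: fadd_def)
  also have "\<dots> = (\<Sum>w\<in>?S. f w * eval_word D w) + (\<Sum>w\<in>?S. g w * eval_word D w)"
    by (simp add: fadd_def algebra_simps sum.distrib)
  also have "\<dots> = eval_at D f + eval_at D g"
    using eval_at_eq_sum[OF S, of f D] eval_at_eq_sum[OF S, of g D] by auto
  finally show ?thesis .
qed

lemma eval_at_fsmult: "f \<in> fa_set \<Longrightarrow> eval_at D (fsmult c f) = c * eval_at D f"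
  using eval_at_eq_sum[OF fa_set_finite_supp, of f "fsmult c f" D]
  by (auto simp: eval_at_def fsmult_def sum_distrib_left algebra_simps)

lemma eval_at_fdiff:
  "f \<in> fa_set \<Longrightarrow> g \<in> fa_set \<Longrightarrow> eval_at D (fdiff f g) = eval_at D f - eval_at D g"
  by (simp add: fdiff_eq_fadd_fsmult eval_at_fadd eval_at_fsmult fsmult_in_fa_set)

lemma eval_at_sum:
  "finite A \<Longrightarrow> (\<And>a. a \<in> A \<Longrightarrow> F a \<in> fa_set) \<Longrightarrow>
    eval_at D (\<lambda>w. \<Sum>a\<in>A. F a w) = (\<Sum>a\<in>A. eval_at D (F a))"
proof (induction A rule: finite_induct)
  case empty
  then show ?case by (simp flip: fzero_def)
next
  case (insert x A)
  then have "(\<lambda>w. \<Sum>a\<in>insert x A. F a w) = fadd (F x) (\<lambda>w. \<Sum>a\<in>A. F a w)"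
    by (simp add: fadd_def)
  with insert show ?case by (simp add: eval_at_fadd sum_in_fa_set)
qed

lemma fmul_eq_sum_pairs:
  assumes "supp f \<times> supp g \<subseteq> P"
  shows "fmul f g w = (\<Sum>p\<in>{p\<in>P. fst p @ snd p = w}. f (fst p) * g (snd p))"
proof -
  let ?split = "\<lambda>i. (take i w, drop i w)"
  have inj: "inj_on ?split {..length w}"
    by (rule inj_onI) (metis Pair_inject atMost_iff length_take min.absorb2)
  have img: "?split ` {..length w} = {p. fst p @ snd p = w}"
  proof
    show "{p. fst p @ snd p = w} \<subseteq> ?split ` {..length w}"
    proof
      fix p assume "p \<in> {p. fst p @ snd p = w}"
      then show "p \<in> ?split ` {..length w}" by (intro image_eqI[of _ _ "length (fst p)"]) auto
    qed
  qed auto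
  have "fmul f g w = (\<Sum>p\<in>?split ` {..length w}. f (fst p) * g (snd p))"
    by (simp add: fmul_def sum.reindex[OF inj])
  also have "\<dots> = (\<Sum>p\<in>{p\<in>P. fst p @ snd p = w}. f (fst p) * g (snd p))"
  proof (rule sum.mono_neutral_right)
    show "finite (?split ` {..length w})" by simp
  qed (use img assms in \<open>auto simp: mem_Times_iff\<close>)
  finally show ?thesis .
qed

lemma eval_at_fmul:
  assumes "f \<in> fa_set" "g \<in> fa_set"
  shows "eval_at D (fmul f g) = eval_at D f * eval_at D g"
proof -
  let ?P = "supp f \<times> supp g"
  let ?cat = "\<lambda>p. fst p @ snd p"
  have P: "finite ?P" using assms by (simp add: fa_set_finite_supp)
  have "supp (fmul f g) \<subseteq> ?cat ` ?P"
  proof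
    fix w assume "w \<in> supp (fmul f g)"
    then obtain u v where "w = u @ v" "f u \<noteq> 0" "g v \<noteq> 0" by (auto elim: fmul_nonzero_split)
    then show "w \<in> ?cat ` ?P" by (intro image_eqI[of _ _ "(u, v)"]) auto
  qed
  with P have "eval_at D (fmul f g) = (\<Sum>w\<in>?cat ` ?P. fmul f g w * eval_word D w)"
    by (intro eval_at_eq_sum) auto
  also have "\<dots> = (\<Sum>w\<in>?cat ` ?P. \<Sum>p\<in>{p\<in>?P. ?cat p = w}. f (fst p) * g (snd p) * eval_word D (?cat p))"
    by (intro sum.cong refl) (simp add: fmul_eq_sum_pairs[OF subset_refl] sum_distrib_right)
  also have "\<dots> = (\<Sum>p\<in>?P. f (fst p) * g (snd p) * eval_word D (?cat p))"
    using P by (intro sum.group) auto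
  also have "\<dots> = (\<Sum>p\<in>?P. (f (fst p) * eval_word D (fst p)) * (g (snd p) * eval_word D (snd p)))"
    by (intro sum.cong refl) (simp add: eval_word_def)
  also have "\<dots> = eval_at D f * eval_at D g"
    unfolding eval_at_def sum_product sum.cartesian_product by (simp add: case_prod_beta)
  finally show ?thesis .
qed

definition increasing_matching :: "(nat \<times> nat) set \<Rightarrow> bool" where
  "increasing_matching D \<longleftrightarrow>
     (\<forall>x\<in>D. \<forall>y\<in>D. (fst x = fst y \<or> snd x = snd y \<longrightarrow> x = y) \<and> (fst x < fst y \<longrightarrow> snd x < snd y))"

text \<open>Such a 0/1 matrix has at most one entry in each row and column and none in decreasing
  position, so in every relation the only quadratic monomials not evaluating to 0 are the
  two that cancel.\<close>

lemma eval_at_rels: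
  assumes D: "increasing_matching D" and r: "r \<in> rels q"
  shows "eval_at D r = 0"
proof -
  have row: "a = b" if "(i, a) \<in> D" "(i, b) \<in> D" for i a b
    using D that unfolding increasing_matching_def by fastforce
  have col: "i = j" if "(i, a) \<in> D" "(j, a) \<in> D" for i j a
    using D that unfolding increasing_matching_def by fastforce
  have decr: "\<not> (i < j \<and> a < b)" if "(i, b) \<in> D" "(j, a) \<in> D" for i j a b
    using D that unfolding increasing_matching_def by fastforce
  have YY: "eval_at D (fmul (Yf i a) (Yf j b)) = (if (i, a) \<in> D \<and> (j, b) \<in> D then 1 else 0)"
    for i a j b by (simp add: Yf_def fmul_mono_mono eval_word_def)
  from r show ?thesis
    unfolding rels_def
    by (elim UnE CollectE exE conjE)
      (auto simp: eval_at_fdiff eval_at_fadd eval_at_fsmult YY Yf_in_fa_set fmul_in_fa_set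
        fsmult_in_fa_set fdiff_in_fa_set dest: row col decr)
qed

lemma eval_at_ideal:
  assumes "increasing_matching D"
  shows "f \<in> ideal q \<Longrightarrow> eval_at D f = 0"
proof (induction rule: ideal.induct)
  case (gen r)
  then show ?case using eval_at_rels[OF assms] by blast
next
  case (add f g)
  then show ?case by (simp add: eval_at_fadd ideal_in_fa_set)
next
  case (smult f c)
  then show ?case by (simp add: eval_at_fsmult ideal_in_fa_set)
next
  case (mult f a b)
  then show ?case by (simp add: eval_at_fmul fmul_in_fa_set ideal_in_fa_set)
qed simp

section \<open>Quantum minors\<close>

context
  fixes I L :: "nat set"
  assumes minor_index: "I \<subseteq> {1..3}" "L \<subseteq> {1..3}" "card I = card L"
begin

definition "minor_rows = sorted_list_of_set I"
definition "minor_cols = sorted_list_of_set L"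
definition "minor_diag = {(minor_rows ! k, minor_cols ! k) | k. k < card I}"
definition "minor_word p = map (\<lambda>k. (minor_rows ! k, minor_cols ! p k)) [0..<card I]"

lemma length_minor_rows_cols: "length minor_rows = card I" "length minor_cols = card I"
  using minor_index finite_subset[of _ "{1..3::nat}"]
  by (auto simp: minor_rows_def minor_cols_def)

lemma minor_rows_cols_in: "k < card I \<Longrightarrow> minor_rows ! k \<in> {1..3} \<and> minor_cols ! k \<in> {1..3}"
  using length_minor_rows_cols minor_index finite_subset[of _ "{1..3::nat}"]
  by (metis minor_rows_def minor_cols_def nth_mem set_sorted_list_of_set subsetD finite_atLeastAtMost)

lemma minor_rows_cols_strict_mono:
  "k < m \<Longrightarrow> m < card I \<Longrightarrow> minor_rows ! k < minor_rows ! m \<and> minor_cols ! k < minor_cols ! m"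
  using length_minor_rows_cols strict_sorted_list_of_set sorted_wrt_nth_less
  unfolding minor_rows_def minor_cols_def by metis

lemma minor_rows_cols_less_iff:
  assumes "k < card I" "m < card I"
  shows "minor_rows ! k < minor_rows ! m \<longleftrightarrow> k < m" "minor_cols ! k < minor_cols ! m \<longleftrightarrow> k < m"
  using assms minor_rows_cols_strict_mono[of k m] minor_rows_cols_strict_mono[of m k]
  by (metis less_asym linorder_neqE_nat)+

lemma minor_rows_cols_eq_iff:
  assumes "k < card I" "m < card I"
  shows "minor_rows ! k = minor_rows ! m \<longleftrightarrow> k = m" "minor_cols ! k = minor_cols ! m \<longleftrightarrow> k = m"
  using minor_rows_cols_less_iff[OF assms] minor_rows_cols_less_iff[OF assms(2,1)]
  by (metis linorder_neqE_nat less_irrefl)+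

lemma increasing_matching_minor_diag: "increasing_matching minor_diag"
  unfolding increasing_matching_def minor_diag_def
  by (auto simp: minor_rows_cols_less_iff minor_rows_cols_eq_iff)

lemma qminor_fa_eq: "qminor_fa q I L = (\<lambda>u. \<Sum>p\<in>{p. p permutes {..<card I}}.
    fsmult ((- q) ^ card {(i, j). i < j \<and> j < card I \<and> p j < p i}) (mono (minor_word p)) u)"
  by (simp add: qminor_fa_def Let_def minor_rows_def minor_cols_def minor_word_def fsmult_def)

lemma minor_word_in_fa_set: "p permutes {..<card I} \<Longrightarrow> mono (minor_word p) \<in> fa_set"
  using minor_rows_cols_in permutes_in_image[of p "{..<card I}"]
  by (intro mono_in_fa_set) (auto simp: minor_word_def gens_def)

lemma qminor_fa_in_fa_set: "qminor_fa q I L \<in> fa_set"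
  unfolding qminor_fa_eq
  by (intro sum_in_fa_set fsmult_in_fa_set minor_word_in_fa_set) (auto simp: finite_permutations)

lemma homogeneous_qminor_fa: "homogeneous (card I) (qminor_fa q I L)"
proof -
  have "homogeneous (card I) (fsmult c (mono (minor_word p)))" for c p
    by (intro homogeneous_fsmult) (use homogeneous_mono[of "minor_word p"] in \<open>simp add: minor_word_def\<close>)
  then show ?thesis
    unfolding qminor_fa_eq homogeneous_def
    by (force elim: sum.not_neutral_contains_not_neutral)
qed

lemma eval_word_minor_word:
  assumes p: "p permutes {..<card I}"
  shows "eval_word minor_diag (minor_word p) = (if p = id then 1 else 0)"
proof -
  have "p = id" if "set (minor_word p) \<subseteq> minor_diag"
  proof
    fix x
    show "p x = id x"
    proof (cases "x < card I")
      case True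
      then have "(minor_rows ! x, minor_cols ! p x) \<in> minor_diag"
        using that by (auto simp: minor_word_def)
      then obtain k where k: "k < card I" "minor_rows ! x = minor_rows ! k" "minor_cols ! p x = minor_cols ! k"
        by (auto simp: minor_diag_def)
      have "p x < card I" using permutes_in_image[OF p] True by simp
      with k True show ?thesis by (simp add: minor_rows_cols_eq_iff)
    next
      case False
      then show ?thesis using permutes_not_in[OF p] by simp
    qed
  qed
  moreover have "set (minor_word id) \<subseteq> minor_diag" by (auto simp: minor_word_def minor_diag_def)
  ultimately show ?thesis by (auto simp: eval_word_def)
qed

lemma eval_at_qminor_fa: "eval_at minor_diag (qminor_fa q I L) = 1"
proof -
  let ?P = "{p. p permutes {..<card I}}"
  let ?c = "\<lambda>p. (- q) ^ card {(i, j). i < j \<and> j < card I \<and> p j < p i}"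
  have "eval_at minor_diag (qminor_fa q I L) = (\<Sum>p\<in>?P. eval_at minor_diag (fsmult (?c p) (mono (minor_word p))))"
    unfolding qminor_fa_eq
    by (rule eval_at_sum) (auto simp: finite_permutations intro!: fsmult_in_fa_set minor_word_in_fa_set)
  also have "\<dots> = (\<Sum>p\<in>?P. if p = id then ?c p else 0)"
    by (intro sum.cong refl) (simp add: eval_at_fsmult minor_word_in_fa_set eval_word_minor_word)
  also have "\<dots> = ?c id" by (simp add: finite_permutations permutes_id)
  also have "{(i, j). i < j \<and> j < card I \<and> id j < id i} = {}" by auto
  finally show ?thesis by simp
qed

lemma qminor_fa_notin_ideal: "qminor_fa q I L \<notin> ideal q"
proof
  assume "qminor_fa q I L \<in> ideal q"
  then have "eval_at minor_diag (qminor_fa q I L) = 0"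
    by (rule eval_at_ideal[OF increasing_matching_minor_diag])
  then show False by (simp add: eval_at_qminor_fa)
qed

end

theorem lemma2p1:
  fixes q :: "'k::field" and \<sigma> :: "'k fa set \<Rightarrow> 'k fa set" and I L :: "nat set"
  assumes "q \<noteq> 0" and "\<forall>n>0. q ^ n \<noteq> 1"
    and "alg_aut q \<sigma>"
    and "\<forall>i\<in>{1..3}. \<forall>a\<in>{1..3}. rsub q (\<sigma> (Y q i a)) (Y q i a) \<in> Rge q 2"
    and "I \<subseteq> {1..3}" and "L \<subseteq> {1..3}" and "card I = card L" and "I \<noteq> {}"
  shows "rsub q (\<sigma> (qminor q I L)) (qminor q I L) \<in> Rge q (card I + 1)
     \<and> (\<sigma> (qminor q I L) = qminor q I L \<longleftrightarrow> rdeg q (\<sigma> (qminor q I L)) = card I)"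
proof -
  define m where "m = qminor_fa q I L"
  have M: "qminor q I L = cls q m" by (simp add: qminor_def m_def)
  have m: "m \<in> fa_set" "homogeneous (card I) m" "m \<notin> ideal q"
    unfolding m_def using qminor_fa_in_fa_set[OF assms(5-7)] homogeneous_qminor_fa[OF assms(5-7)]
      qminor_fa_notin_ideal[OF assms(5-7)] by blast+
  have fixed: "fixed_upto q \<sigma> (card I + 1) m"
    using fixed_upto_homogeneous[OF assms(3,4) m(1,2)] .
  then obtain e where e: "e \<in> fa_set" "order_ge (card I + 1) e" "\<sigma> (qminor q I L) = cls q (fadd m e)"
    unfolding M fixed_upto_def by blast
  have "\<sigma> (qminor q I L) = qminor q I L \<longleftrightarrow> e \<in> ideal q"
    unfolding e(3) unfolding M using cls_eq_iff[OF fadd_in_fa_set[OF m(1) e(1)] m(1)]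
    by (simp add: fdiff_def fadd_def)
  moreover have "rdeg q (\<sigma> (qminor q I L)) = card I \<longleftrightarrow> e \<in> ideal q"
    unfolding e(3) using rdeg_cls_fadd_order_ge[OF m e(1,2)] .
  moreover have "rsub q (\<sigma> (qminor q I L)) (qminor q I L) \<in> Rge q (card I + 1)"
    using fixed fixed_upto_iff_rsub_in_Rge[OF m(1)] aut_in_Rcar[OF assms(3)] cls_in_Rcar m(1)
    unfolding M by blast
  ultimately show ?thesis by simp
qed

end
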